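(* Let $G=(V,E)$ be a graph on $V=\{v_1,\dots,v_N\}$ ($N\ge 3$) with edge weights $w:E\to\mathbb{R}$, and let $\pi^\star=(v_1,\dots,v_N)$ be the ground-truth order, whose "true edges" are $(v_k,v_{k+1})$, $1\le k\le N-1$. Assume: (A1) for every internal vertex $v_i$ ($2\le i\le N-1$), its two true incident edges $e_i^-=(v_{i-1},v_i)$ and $e_i^+=(v_i,v_{i+1})$ belong to $E$ and have maximum weight among all edges of $E$ incident to $v_i$; (A2) there exists $\Delta>0$ such that for every internal vertex $v_i$ and every non-true edge $(v_i,u)\in E$, $w(e_i^-)\ge w(v_i,u)+\Delta$ and $w(e_i^+)\ge w(v_i,u)+\Delta$. Let $C=(v_i,v_{i+1},\dots,v_j)$ with $1\le i<j\le N$ be a contiguous substring of $\pi^\star$, and call an edge "used" if it is one of $(v_k,v_{k+1})$ with $i\le k<j$ and "unused" otherwise. Then: if $i\ge 2$, among the unused edges of $E$ incident to $v_i$ the heaviest is uniquely the true boundary edge $(v_{i-1},v_i)$; and if $j\le N-1$, among the unused edges of $E$ incident to $v_j$ the heaviest is uniquely the true boundary edge $(v_j,v_{j+1})$.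
   Context: A "contiguous substring" of $\pi^\star$ is a chain $(v_i,\dots,v_j)$ of consecutive vertices in the true order; its internal edges are the used edges. A non-true edge is any edge of $E$ not of the form $(v_k,v_{k+1})$. *)

theory Defs
  imports Complex_Main
begin

(* Vertices v_1..v_N are represented by the naturals 1..N; the ground-truth order is 1,2,...,N.
   The graph is simple undirected: an edge is a two-element set {a,b} of vertices. *)

definition simple_graph_on :: "nat \<Rightarrow> nat set set \<Rightarrow> bool" where
  "simple_graph_on N E \<longleftrightarrow> (\<forall>e\<in>E. \<exists>a b. e = {a,b} \<and> a \<noteq> b \<and> a \<in> {1..N} \<and> b \<in> {1..N})"

definition true_edge :: "nat \<Rightarrow> nat set \<Rightarrow> bool" where
  "true_edge N e \<longleftrightarrow> (\<exists>k. 1 \<le> k \<and> k \<le> N - 1 \<and> e = {k, Suc k})"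

definition incident :: "nat set set \<Rightarrow> nat \<Rightarrow> nat set set" where
  "incident E v = {e \<in> E. v \<in> e}"

definition used_edge :: "nat \<Rightarrow> nat \<Rightarrow> nat set \<Rightarrow> bool" where
  "used_edge i j e \<longleftrightarrow> (\<exists>k. i \<le> k \<and> k < j \<and> e = {k, Suc k})"

definition unique_heaviest :: "(nat set \<Rightarrow> real) \<Rightarrow> nat set set \<Rightarrow> nat set \<Rightarrow> bool" where
  "unique_heaviest w S e \<longleftrightarrow> e \<in> S \<and> (\<forall>e'\<in>S. e' \<noteq> e \<longrightarrow> w e' < w e)"

end

theory Submission
  imports Defs
begin

text \<open>At an endpoint of the substring one of its two true edges is used, so the other one is the
  only true edge left among the unused edges there; the margin \<open>\<Delta>\<close> of (A2) makes it strictly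
  heavier than every remaining (non-true) edge.\<close>

lemma simple_graph_incident_edge:
  assumes "simple_graph_on N E" "e \<in> incident E v"
  obtains u where "e = {v, u}"
  using assms unfolding simple_graph_on_def incident_def by fastforce

lemma true_edge_neighbour:
  assumes "true_edge N {v, u}"
  shows "u = v - 1 \<or> u = v + 1"
proof -
  obtain k where "{v, u} = {k, Suc k}"
    using assms unfolding true_edge_def by blast
  then have "(v = k \<and> u = Suc k) \<or> (v = Suc k \<and> u = k)"
    by (simp add: doubleton_eq_iff)
  then show ?thesis by auto
qed

lemma used_edge_first: "i < j \<Longrightarrow> used_edge i j {i, i + 1}"
  unfolding used_edge_def by auto

lemma used_edge_last: "i < j \<Longrightarrow> used_edge i j {j - 1, j}"
  unfolding used_edge_def by (intro exI[of _ "j - 1"]) auto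

lemma not_used_edge_before: "1 \<le> i \<Longrightarrow> \<not> used_edge i j {i - 1, i}"
  unfolding used_edge_def by (auto simp: doubleton_eq_iff)

lemma not_used_edge_after: "\<not> used_edge i j {j, j + 1}"
  unfolding used_edge_def by (auto simp: doubleton_eq_iff)

lemma unique_heaviest_only_true_edge:
  assumes G: "simple_graph_on N E"
    and S: "S \<subseteq> incident E v" "t \<in> S"
    and only_true: "\<And>u. {v, u} \<in> S \<Longrightarrow> true_edge N {v, u} \<Longrightarrow> {v, u} = t"
    and dominates: "\<And>u. {v, u} \<in> E \<Longrightarrow> \<not> true_edge N {v, u} \<Longrightarrow> w {v, u} < w t"
  shows "unique_heaviest w S t"
  unfolding unique_heaviest_def
proof (intro conjI ballI impI)
  show "t \<in> S" by (fact S(2))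
  fix e assume "e \<in> S" "e \<noteq> t"
  moreover from \<open>e \<in> S\<close> S(1) G obtain u where "e = {v, u}"
    using simple_graph_incident_edge by blast
  ultimately show "w e < w t"
    using only_true dominates S(1) unfolding incident_def by blast
qed

theorem mainTheorem2:
  fixes N :: nat and E :: "nat set set" and w :: "nat set \<Rightarrow> real" and i j :: nat
  assumes N3: "N \<ge> 3"
    and G: "simple_graph_on N E"
    and A1: "\<forall>v. 2 \<le> v \<and> v \<le> N - 1 \<longrightarrow>
               {v - 1, v} \<in> E \<and> {v, v + 1} \<in> E \<and>
               (\<forall>e\<in>incident E v. w e \<le> w {v - 1, v} \<and> w e \<le> w {v, v + 1})"
    and A2: "\<exists>\<Delta>>0. \<forall>v u. 2 \<le> v \<and> v \<le> N - 1 \<and> {v, u} \<in> E \<and> \<not> true_edge N {v, u} \<longrightarrow>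
               w {v - 1, v} \<ge> w {v, u} + \<Delta> \<and> w {v, v + 1} \<ge> w {v, u} + \<Delta>"
    and ij: "1 \<le> i" "i < j" "j \<le> N"
  shows "(2 \<le> i \<longrightarrow>
           unique_heaviest w {e \<in> incident E i. \<not> used_edge i j e} {i - 1, i})
       \<and> (j \<le> N - 1 \<longrightarrow>
           unique_heaviest w {e \<in> incident E j. \<not> used_edge i j e} {j, j + 1})"
proof -
  have separated: "w {v, u} < w {v - 1, v} \<and> w {v, u} < w {v, v + 1}"
    if "2 \<le> v" "v \<le> N - 1" "{v, u} \<in> E" "\<not> true_edge N {v, u}" for v u
    using A2 that by force
  have "unique_heaviest w {e \<in> incident E i. \<not> used_edge i j e} {i - 1, i}" if "2 \<le> i"
  proof (rule unique_heaviest_only_true_edge[OF G])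
    show "{i - 1, i} \<in> {e \<in> incident E i. \<not> used_edge i j e}"
      using A1 that ij not_used_edge_before unfolding incident_def by auto
  next
    show "{i, u} = {i - 1, i}"
      if "{i, u} \<in> {e \<in> incident E i. \<not> used_edge i j e}" "true_edge N {i, u}" for u
      using that used_edge_first[OF ij(2)] true_edge_neighbour[of N i u]
      by (auto simp: insert_commute)
  qed (use separated that ij in auto)
  moreover have "unique_heaviest w {e \<in> incident E j. \<not> used_edge i j e} {j, j + 1}"
    if "j \<le> N - 1"
  proof (rule unique_heaviest_only_true_edge[OF G])
    show "{j, j + 1} \<in> {e \<in> incident E j. \<not> used_edge i j e}"
      using A1 that ij not_used_edge_after unfolding incident_def by auto
  next
    show "{j, u} = {j, j + 1}"
      if "{j, u} \<in> {e \<in> incident E j. \<not> used_edge i j e}" "true_edge N {j, u}" for u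
      using that used_edge_last[OF ij(2)] true_edge_neighbour[of N j u]
      by (auto simp: insert_commute)
  qed (use separated that ij in auto)
  ultimately show ?thesis by blast
qed

end
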